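(* Let $X$ be a real reflexive Banach space, $f:X\to\mathbb{R}\cup\{+\infty\}$ a lower semicontinuous proper convex function, $f^{FY}(x,x^{\ast}):=f(x)+f^{\ast}(x^{\ast})$, and let $h\in\mathcal{H}(\partial f)$ satisfy $h\le f^{FY}$. Then for every $(x,x^{\ast})\in X\times X^{\ast}$, $$h(x,x^{\ast})+h^{\ast}(x^{\ast},x)\ge\langle x,x^{\ast}\rangle+f(x)+f^{\ast}(x^{\ast}).$$
   Context: $X^{\ast}$ is the dual of $X$ with pairing $\langle\cdot,\cdot\rangle$; $f^{\ast}(x^{\ast})=\sup_x\{\langle x,x^{\ast}\rangle-f(x)\}$ and $\partial f$ is the convex subdifferential of $f$. The dual of $X\times X^{\ast}$ is identified with $X^{\ast}\times X$ via $\langle (x,x^{\ast}),(y^{\ast},y)\rangle=\langle x,y^{\ast}\rangle+\langle y,x^{\ast}\rangle$, and $h^{\ast}(y^{\ast},y)=\sup_{(x,x^{\ast})}\{\langle x,y^{\ast}\rangle+\langle y,x^{\ast}\rangle-h(x,x^{\ast})\}$. For a maximally monotone $T$, $\mathcal{H}(T)$ is the family of lower semicontinuous convex $h:X\times X^{\ast}\to\mathbb{R}\cup\{+\infty\}$ with $h(x,x^{\ast})\ge\langle x,x^{\ast}\rangle$ everywhere and equality whenever $x^{\ast}\in T(x)$. *)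

theory Defs
  imports "HOL-Analysis.Analysis" "HOL-Library.Extended_Real"
begin

text \<open>The dual X* of a real Banach space X is the space of bounded linear
functionals 'a \<Rightarrow>L real; the pairing is application.  Extended-real valued
functions are modelled by ereal with values in the reals plus +infinity.\<close>

definition reflexive_space :: "'a::banach itself \<Rightarrow> bool" where
  "reflexive_space _ \<longleftrightarrow>
     (\<forall>\<Phi> :: ('a \<Rightarrow>\<^sub>L real) \<Rightarrow>\<^sub>L real. \<exists>x::'a. \<forall>\<phi>. blinfun_apply \<Phi> \<phi> = blinfun_apply \<phi> x)"

definition lsc_fun :: "('b::topological_space \<Rightarrow> ereal) \<Rightarrow> bool" where
  "lsc_fun f \<longleftrightarrow> (\<forall>c::real. closed {x. f x \<le> ereal c})"

definition convex_efun :: "('b::real_vector \<Rightarrow> ereal) \<Rightarrow> bool" where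
  "convex_efun f \<longleftrightarrow> (\<forall>x y. \<forall>t::real. 0 < t \<and> t < 1 \<longrightarrow>
       f ((1 - t) *\<^sub>R x + t *\<^sub>R y) \<le> ereal (1 - t) * f x + ereal t * f y)"

definition proper_efun :: "('b \<Rightarrow> ereal) \<Rightarrow> bool" where
  "proper_efun f \<longleftrightarrow> (\<forall>x. f x \<noteq> -\<infinity>) \<and> (\<exists>x. f x \<noteq> \<infinity>)"

definition fconj :: "('a::real_normed_vector \<Rightarrow> ereal) \<Rightarrow> ('a \<Rightarrow>\<^sub>L real) \<Rightarrow> ereal" where
  "fconj f xs = (SUP x. ereal (blinfun_apply xs x) - f x)"

definition conj2 :: "('a::real_normed_vector \<times> ('a \<Rightarrow>\<^sub>L real) \<Rightarrow> ereal)
      \<Rightarrow> ('a \<Rightarrow>\<^sub>L real) \<times> 'a \<Rightarrow> ereal" where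
  "conj2 h p = (SUP q. ereal (blinfun_apply (fst p) (fst q) + blinfun_apply (snd q) (snd p)) - h q)"

definition subdiff :: "('a::real_normed_vector \<Rightarrow> ereal) \<Rightarrow> 'a \<Rightarrow> ('a \<Rightarrow>\<^sub>L real) set" where
  "subdiff f x = {xs. f x \<noteq> \<infinity> \<and> f x \<noteq> -\<infinity> \<and>
       (\<forall>y. f x + ereal (blinfun_apply xs (y - x)) \<le> f y)}"

definition repr_family :: "('a::real_normed_vector \<Rightarrow> ('a \<Rightarrow>\<^sub>L real) set)
      \<Rightarrow> ('a \<times> ('a \<Rightarrow>\<^sub>L real) \<Rightarrow> ereal) set" where
  "repr_family T = {h. lsc_fun h \<and> convex_efun h \<and>
       (\<forall>x xs. ereal (blinfun_apply xs x) \<le> h (x, xs)) \<and>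
       (\<forall>x xs. xs \<in> T x \<longrightarrow> h (x, xs) = ereal (blinfun_apply xs x))}"

end

theory Submission
  imports Defs
begin

text \<open>Conjugation reverses inequalities, so \<open>h \<le> f \<oplus> f\<^sup>*\<close> gives
  \<open>h\<^sup>*(x\<^sup>*, x) \<ge> (f \<oplus> f\<^sup>*)\<^sup>*(x\<^sup>*, x) = f\<^sup>*(x\<^sup>*) + f\<^sup>*\<^sup>*(x)\<close>,
  and \<open>f\<^sup>*\<^sup>* = f\<close> by the Fenchel--Moreau theorem; adding \<open>h(x, x\<^sup>*) \<ge> \<langle>x, x\<^sup>*\<rangle>\<close>
  gives the claim. Fenchel--Moreau needs a continuous functional separating a point below the
  closed convex epigraph from it, which comes from Hahn--Banach.\<close>

section \<open>Hahn--Banach\<close>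

text \<open>A linear functional on a subspace, dominated by \<open>p\<close>, is represented by its graph,
  so that Zorn's lemma applies directly to set inclusion.\<close>

definition dominated_linear_graph :: "('v::real_vector \<Rightarrow> real) \<Rightarrow> ('v \<times> real) set \<Rightarrow> bool" where
  "dominated_linear_graph p G \<longleftrightarrow> (0, 0) \<in> G \<and>
     (\<forall>x a b. (x, a) \<in> G \<longrightarrow> (x, b) \<in> G \<longrightarrow> a = b) \<and>
     (\<forall>x a y b. (x, a) \<in> G \<longrightarrow> (y, b) \<in> G \<longrightarrow> (x + y, a + b) \<in> G) \<and>
     (\<forall>x a t. (x, a) \<in> G \<longrightarrow> (t *\<^sub>R x, t * a) \<in> G) \<and>
     (\<forall>x a. (x, a) \<in> G \<longrightarrow> a \<le> p x)"

lemma dominated_linear_graphD: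
  assumes "dominated_linear_graph p G"
  shows dominated_linear_graph_zero: "(0, 0) \<in> G"
    and dominated_linear_graph_unique: "(x, a) \<in> G \<Longrightarrow> (x, b) \<in> G \<Longrightarrow> a = b"
    and dominated_linear_graph_add: "(x, a) \<in> G \<Longrightarrow> (y, b) \<in> G \<Longrightarrow> (x + y, a + b) \<in> G"
    and dominated_linear_graph_scaleR: "(x, a) \<in> G \<Longrightarrow> (t *\<^sub>R x, t * a) \<in> G"
    and dominated_linear_graph_le: "(x, a) \<in> G \<Longrightarrow> a \<le> p x"
  using assms unfolding dominated_linear_graph_def by blast+

lemma sublinear_pos_homogeneous:
  fixes p :: "'v::real_vector \<Rightarrow> real"
  assumes hom: "\<And>t x. t > 0 \<Longrightarrow> p (t *\<^sub>R x) \<le> t * p x" and t: "t > 0"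
  shows "p (t *\<^sub>R x) = t * p x"
proof -
  have "p x = p ((1 / t) *\<^sub>R (t *\<^sub>R x))" using t by simp
  also have "\<dots> \<le> (1 / t) * p (t *\<^sub>R x)" using hom[of "1 / t" "t *\<^sub>R x"] t by simp
  finally have "t * p x \<le> p (t *\<^sub>R x)" using t by (simp add: field_simps)
  with hom[OF t, of x] show ?thesis by linarith
qed

lemma dominated_linear_graph_Union_chain:
  assumes C: "C \<in> chains {G. dominated_linear_graph p G}" "C \<noteq> {}"
  shows "dominated_linear_graph p (\<Union>C)"
proof -
  have sub: "\<And>G. G \<in> C \<Longrightarrow> dominated_linear_graph p G"
    using C unfolding chains_def by blast
  have two: "\<exists>G\<in>C. u \<in> G \<and> v \<in> G" if "u \<in> \<Union>C" "v \<in> \<Union>C" for u v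
    using that C unfolding chains_def chain_subset_def by blast
  obtain G0 where "G0 \<in> C" using C by auto
  then have "(0, 0) \<in> \<Union>C" using sub dominated_linear_graph_zero by blast
  moreover have "a = b" if "(x, a) \<in> \<Union>C" "(x, b) \<in> \<Union>C" for x a b
    using two[OF that] sub dominated_linear_graph_unique by metis
  moreover have "(x + y, a + b) \<in> \<Union>C" if "(x, a) \<in> \<Union>C" "(y, b) \<in> \<Union>C" for x a y b
    using two[OF that] sub dominated_linear_graph_add by blast
  moreover have "(t *\<^sub>R x, t * a) \<in> \<Union>C" if "(x, a) \<in> \<Union>C" for x a t
    using that sub dominated_linear_graph_scaleR by blast
  moreover have "a \<le> p x" if "(x, a) \<in> \<Union>C" for x a
    using that sub dominated_linear_graph_le by blast
  ultimately show ?thesis unfolding dominated_linear_graph_def by blast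
qed

lemma dominated_linear_graph_extension_value:
  assumes subadd: "\<And>x y. p (x + y) \<le> p x + p y" and G: "dominated_linear_graph p G"
  obtains c where "\<And>s a. (s, a) \<in> G \<Longrightarrow> a - p (s - y) \<le> c"
    and "\<And>s a. (s, a) \<in> G \<Longrightarrow> c \<le> p (s + y) - a"
proof
  define L where "L = {a - p (s - y) | s a. (s, a) \<in> G}"
  have "L \<noteq> {}" using dominated_linear_graph_zero[OF G] unfolding L_def by blast
  have bdd: "bdd_above L"
  proof (rule bdd_aboveI)
    fix l assume "l \<in> L"
    then obtain s a where l: "l = a - p (s - y)" "(s, a) \<in> G" unfolding L_def by blast
    have "a \<le> p s" using dominated_linear_graph_le[OF G l(2)] .
    also have "\<dots> \<le> p (s - y) + p y" using subadd[of "s - y" y] by simp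
    finally show "l \<le> p y" using l by simp
  qed
  show "a - p (s - y) \<le> Sup L" if "(s, a) \<in> G" for s a
    by (rule cSup_upper[OF _ bdd]) (use that L_def in blast)
  show "Sup L \<le> p (s + y) - a" if "(s, a) \<in> G" for s a
  proof (rule cSup_least[OF \<open>L \<noteq> {}\<close>])
    fix l assume "l \<in> L"
    then obtain s1 a1 where l: "l = a1 - p (s1 - y)" "(s1, a1) \<in> G" unfolding L_def by blast
    have "a1 + a \<le> p (s1 + s)"
      using dominated_linear_graph_le[OF G dominated_linear_graph_add[OF G l(2) that]] .
    also have "\<dots> \<le> p (s1 - y) + p (s + y)" using subadd[of "s1 - y" "s + y"] by (simp add: algebra_simps)
    finally show "l \<le> p (s + y) - a" using l by simp
  qed
qed

lemma dominated_linear_graph_extension_le: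
  assumes hom: "\<And>t x. t > 0 \<Longrightarrow> p (t *\<^sub>R x) = t * p x" and G: "dominated_linear_graph p G"
    and below: "\<And>s a. (s, a) \<in> G \<Longrightarrow> a - p (s - y) \<le> c"
    and above: "\<And>s a. (s, a) \<in> G \<Longrightarrow> c \<le> p (s + y) - a"
    and sa: "(s, a) \<in> G"
  shows "a + t * c \<le> p (s + t *\<^sub>R y)"
proof (cases t "0 :: real" rule: linorder_cases)
  case equal
  then show ?thesis using dominated_linear_graph_le[OF G sa] by simp
next
  case greater
  have "c \<le> p ((1 / t) *\<^sub>R s + y) - (1 / t) * a"
    using above[OF dominated_linear_graph_scaleR[OF G sa]] .
  then have "t * c \<le> t * (p ((1 / t) *\<^sub>R s + y) - (1 / t) * a)"
    using greater by (simp add: mult_left_mono)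
  also have "\<dots> = t * p ((1 / t) *\<^sub>R s + y) - a"
    using greater by (simp add: algebra_simps)
  also have "t * p ((1 / t) *\<^sub>R s + y) = p (s + t *\<^sub>R y)"
    using hom[OF greater, of "(1 / t) *\<^sub>R s + y"] greater by (simp add: algebra_simps)
  finally show ?thesis by simp
next
  case less
  define u where "u = - t"
  have u: "u > 0" using less u_def by simp
  have "(1 / u) * a - p ((1 / u) *\<^sub>R s - y) \<le> c"
    using below[OF dominated_linear_graph_scaleR[OF G sa]] .
  then have "u * ((1 / u) * a - p ((1 / u) *\<^sub>R s - y)) \<le> u * c"
    using u by (simp add: mult_left_mono)
  then have "a - u * p ((1 / u) *\<^sub>R s - y) \<le> u * c"
    using u by (simp add: algebra_simps)
  also have "u * p ((1 / u) *\<^sub>R s - y) = p (s + t *\<^sub>R y)"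
    using hom[OF u, of "(1 / u) *\<^sub>R s - y"] u by (simp add: u_def algebra_simps)
  finally show ?thesis using u_def by simp
qed

lemma dominated_linear_graph_ray_unique:
  assumes G: "dominated_linear_graph p G" and y: "\<And>a. (y, a) \<notin> G"
    and "(s, a) \<in> G" "(s', a') \<in> G" and eq: "s + t *\<^sub>R y = s' + t' *\<^sub>R y"
  shows "t = t'"
proof (rule ccontr)
  assume "t \<noteq> t'"
  have "(s' + (-1) *\<^sub>R s, a' + (-1) * a) \<in> G"
    using assms dominated_linear_graph_add dominated_linear_graph_scaleR by blast
  then have "((1 / (t - t')) *\<^sub>R (s' + (-1) *\<^sub>R s), (1 / (t - t')) * (a' + (-1) * a)) \<in> G"
    using dominated_linear_graph_scaleR[OF G] by blast
  moreover have "s' - s = (t - t') *\<^sub>R y" using eq by (simp add: algebra_simps)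
  then have "(1 / (t - t')) *\<^sub>R (s' + (-1) *\<^sub>R s) = y" using \<open>t \<noteq> t'\<close> by simp
  ultimately show False using y by metis
qed

definition graph_extension :: "('v::real_vector \<times> real) set \<Rightarrow> 'v \<Rightarrow> real \<Rightarrow> ('v \<times> real) set" where
  "graph_extension G y c = {(s + t *\<^sub>R y, a + t * c) | s a t. (s, a) \<in> G}"

lemma dominated_linear_graph_graph_extension:
  assumes hom: "\<And>t x. t > 0 \<Longrightarrow> p (t *\<^sub>R x) = t * p x"
    and G: "dominated_linear_graph p G" and y: "\<And>a. (y, a) \<notin> G"
    and below: "\<And>s a. (s, a) \<in> G \<Longrightarrow> a - p (s - y) \<le> c"
    and above: "\<And>s a. (s, a) \<in> G \<Longrightarrow> c \<le> p (s + y) - a"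
  shows "dominated_linear_graph p (graph_extension G y c)"
proof -
  let ?G' = "graph_extension G y c"
  have "(0, 0) \<in> ?G'"
    unfolding graph_extension_def using dominated_linear_graph_zero[OF G] by force
  moreover have "a = b" if mem: "(x, a) \<in> ?G'" "(x, b) \<in> ?G'" for x a b
  proof -
    obtain s1 a1 t1 where h1: "x = s1 + t1 *\<^sub>R y" "a = a1 + t1 * c" "(s1, a1) \<in> G"
      using mem(1) unfolding graph_extension_def by blast
    obtain s2 a2 t2 where h2: "x = s2 + t2 *\<^sub>R y" "b = a2 + t2 * c" "(s2, a2) \<in> G"
      using mem(2) unfolding graph_extension_def by blast
    have "t1 = t2" using dominated_linear_graph_ray_unique[OF G y h1(3) h2(3)] h1(1) h2(1) by metis
    with h1 h2 show ?thesis using dominated_linear_graph_unique[OF G] by auto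
  qed
  moreover have "(x + z, a + b) \<in> ?G'" if mem: "(x, a) \<in> ?G'" "(z, b) \<in> ?G'" for x a z b
  proof -
    obtain s1 a1 t1 where h1: "x = s1 + t1 *\<^sub>R y" "a = a1 + t1 * c" "(s1, a1) \<in> G"
      using mem(1) unfolding graph_extension_def by blast
    obtain s2 a2 t2 where h2: "z = s2 + t2 *\<^sub>R y" "b = a2 + t2 * c" "(s2, a2) \<in> G"
      using mem(2) unfolding graph_extension_def by blast
    have "(s1 + s2, a1 + a2) \<in> G" using dominated_linear_graph_add[OF G h1(3) h2(3)] .
    moreover have "x + z = (s1 + s2) + (t1 + t2) *\<^sub>R y" "a + b = (a1 + a2) + (t1 + t2) * c"
      using h1 h2 by (simp_all add: algebra_simps)
    ultimately show ?thesis unfolding graph_extension_def by blast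
  qed
  moreover have "(r *\<^sub>R x, r * a) \<in> ?G'" if mem: "(x, a) \<in> ?G'" for x a r
  proof -
    obtain s a1 t where h: "x = s + t *\<^sub>R y" "a = a1 + t * c" "(s, a1) \<in> G"
      using mem unfolding graph_extension_def by blast
    have "(r *\<^sub>R s, r * a1) \<in> G" using dominated_linear_graph_scaleR[OF G h(3)] .
    moreover have "r *\<^sub>R x = r *\<^sub>R s + (r * t) *\<^sub>R y" "r * a = r * a1 + (r * t) * c"
      using h by (simp_all add: algebra_simps)
    ultimately show ?thesis unfolding graph_extension_def by blast
  qed
  moreover have "a \<le> p x" if "(x, a) \<in> ?G'" for x a
    using that dominated_linear_graph_extension_le[OF hom G below above]
    unfolding graph_extension_def by blast
  ultimately show ?thesis unfolding dominated_linear_graph_def by blast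
qed

lemma dominated_linear_graph_extend:
  fixes p :: "'v::real_vector \<Rightarrow> real"
  assumes subadd: "\<And>x y. p (x + y) \<le> p x + p y"
    and hom: "\<And>t x. t > 0 \<Longrightarrow> p (t *\<^sub>R x) = t * p x"
    and G: "dominated_linear_graph p G" and y: "\<And>a. (y, a) \<notin> G"
  shows "\<exists>G'. dominated_linear_graph p G' \<and> G \<subset> G'"
proof -
  obtain c where below: "\<And>s a. (s, a) \<in> G \<Longrightarrow> a - p (s - y) \<le> c"
    and above: "\<And>s a. (s, a) \<in> G \<Longrightarrow> c \<le> p (s + y) - a"
    using dominated_linear_graph_extension_value[OF subadd G] by metis
  have "G \<subseteq> graph_extension G y c" unfolding graph_extension_def by force
  moreover have "(y, c) \<in> graph_extension G y c"
    unfolding graph_extension_def using dominated_linear_graph_zero[OF G] by force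
  ultimately show ?thesis
    using dominated_linear_graph_graph_extension[OF hom G y below above] y by blast
qed

theorem hahn_banach_sublinear:
  fixes p :: "'v::real_vector \<Rightarrow> real"
  assumes subadd: "\<And>x y. p (x + y) \<le> p x + p y"
    and hom: "\<And>t x. t > 0 \<Longrightarrow> p (t *\<^sub>R x) \<le> t * p x"
  shows "\<exists>F. linear F \<and> (\<forall>x. F x \<le> p x)"
proof -
  have "dominated_linear_graph p {(0, 0)}"
    using hom[of 2 0] unfolding dominated_linear_graph_def by auto
  then have "\<forall>C\<in>chains {G. dominated_linear_graph p G}.
      \<exists>U\<in>{G. dominated_linear_graph p G}. \<forall>X\<in>C. X \<subseteq> U"
    using dominated_linear_graph_Union_chain by (metis Union_upper empty_iff mem_Collect_eq)
  from Zorn_Lemma2[OF this] obtain G where G: "dominated_linear_graph p G"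
    and max: "\<And>X. dominated_linear_graph p X \<Longrightarrow> G \<subseteq> X \<Longrightarrow> X = G" by blast
  have total: "\<exists>a. (x, a) \<in> G" for x
    using dominated_linear_graph_extend[OF subadd sublinear_pos_homogeneous[OF hom] G] max
    by blast
  define F where "F x = (THE a. (x, a) \<in> G)" for x
  have FG: "(x, F x) \<in> G" for x
    unfolding F_def using total[of x] dominated_linear_graph_unique[OF G] by (metis theI)
  have F_eq: "F x = a" if "(x, a) \<in> G" for x a
    using dominated_linear_graph_unique[OF G FG that] .
  have "linear F"
  proof (rule linearI)
    show "F (x + z) = F x + F z" for x z
      using F_eq dominated_linear_graph_add[OF G FG FG] by blast
    show "F (r *\<^sub>R x) = r *\<^sub>R F x" for r x
      using F_eq dominated_linear_graph_scaleR[OF G FG] by simp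
  qed
  moreover have "\<forall>x. F x \<le> p x" using dominated_linear_graph_le[OF G FG] by blast
  ultimately show ?thesis by blast
qed

section \<open>Separating a convex set from the origin\<close>

text \<open>A sublinear functional below the norm that is at most \<open>-d\<close> on \<open>-D\<close>; any linear
  functional it dominates separates \<open>D\<close> from \<open>0\<close>.\<close>

definition separation_gauge :: "'v::real_normed_vector set \<Rightarrow> real \<Rightarrow> 'v \<Rightarrow> real" where
  "separation_gauge D d z = Inf {norm (z + l *\<^sub>R w) - l * d | l w. 0 \<le> l \<and> w \<in> D}"

context
  fixes D :: "'v::real_normed_vector set" and d :: real
  assumes D_convex: "convex D" and D_nonempty: "D \<noteq> {}"
    and D_far: "\<And>w. w \<in> D \<Longrightarrow> d \<le> norm w"
begin

lemma separation_gauge_le: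
  fixes l :: real
  assumes "0 \<le> l" "w \<in> D"
  shows "separation_gauge D d z \<le> norm (z + l *\<^sub>R w) - l * d"
  unfolding separation_gauge_def
proof (rule cInf_lower)
  show "bdd_below {norm (z + l *\<^sub>R w) - l * d | l w. 0 \<le> l \<and> w \<in> D}"
  proof (rule bdd_belowI, clarify)
    fix l :: real and w assume "0 \<le> l" "w \<in> D"
    have "norm (l *\<^sub>R w) \<le> norm (z + l *\<^sub>R w) + norm z"
      using norm_triangle_ineq4[of "z + l *\<^sub>R w" z] by simp
    moreover have "l * d \<le> norm (l *\<^sub>R w)"
      using \<open>0 \<le> l\<close> D_far[OF \<open>w \<in> D\<close>] by (simp add: mult_left_mono)
    ultimately show "- norm z \<le> norm (z + l *\<^sub>R w) - l * d" by linarith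
  qed
qed (use assms in blast)

lemma separation_gauge_greatest:
  assumes "\<And>l w. 0 \<le> (l::real) \<Longrightarrow> w \<in> D \<Longrightarrow> x \<le> norm (z + l *\<^sub>R w) - l * d"
  shows "x \<le> separation_gauge D d z"
  unfolding separation_gauge_def
proof (rule cInf_greatest)
  obtain w where "w \<in> D" using D_nonempty by blast
  then have "norm (z + 0 *\<^sub>R w) - 0 * d \<in> {norm (z + l *\<^sub>R w) - l * d | l w. 0 \<le> l \<and> w \<in> D}"
    by blast
  then show "{norm (z + l *\<^sub>R w) - l * d | l w. 0 \<le> l \<and> w \<in> D} \<noteq> {}" by blast
qed (use assms in blast)

lemma separation_gauge_le_norm: "separation_gauge D d z \<le> norm z"
  using D_nonempty separation_gauge_le[of 0] by force

lemma separation_gauge_neg: "w \<in> D \<Longrightarrow> separation_gauge D d (- w) \<le> - d"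
  using separation_gauge_le[of 1 w "- w"] by simp

lemma separation_gauge_add:
  "separation_gauge D d (x + y) \<le> separation_gauge D d x + separation_gauge D d y"
proof -
  have combine: "separation_gauge D d (x + y)
      \<le> (norm (x + l1 *\<^sub>R w1) - l1 * d) + (norm (y + l2 *\<^sub>R w2) - l2 * d)"
    if l1: "0 \<le> l1" "w1 \<in> D" and l2: "0 \<le> l2" "w2 \<in> D" for l1 l2 :: real and w1 w2
  proof (cases "l1 + l2 = 0")
    case True
    then have "l1 = 0" "l2 = 0" using l1 l2 by auto
    then show ?thesis
      using separation_gauge_le[of 0 w1 "x + y"] l1 norm_triangle_ineq[of x y] by simp
  next
    case False
    define L where "L = l1 + l2"
    have L: "L > 0" using False l1 l2 L_def by simp
    define w where "w = (l1 / L) *\<^sub>R w1 + (l2 / L) *\<^sub>R w2"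
    have "w \<in> D" unfolding w_def
      by (rule convexD[OF D_convex l1(2) l2(2)])
        (use L l1 l2 L_def in \<open>auto simp: add_divide_distrib[symmetric]\<close>)
    have Lw: "L *\<^sub>R w = l1 *\<^sub>R w1 + l2 *\<^sub>R w2" using L unfolding w_def by (simp add: algebra_simps)
    have "separation_gauge D d (x + y) \<le> norm (x + y + L *\<^sub>R w) - L * d"
      using separation_gauge_le[OF _ \<open>w \<in> D\<close>] L by simp
    also have "norm (x + y + L *\<^sub>R w) \<le> norm (x + l1 *\<^sub>R w1) + norm (y + l2 *\<^sub>R w2)"
      using Lw norm_triangle_ineq[of "x + l1 *\<^sub>R w1" "y + l2 *\<^sub>R w2"] by (simp add: algebra_simps)
    finally show ?thesis using L_def by (simp add: algebra_simps)
  qed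
  have "separation_gauge D d (x + y) - separation_gauge D d y \<le> separation_gauge D d x"
  proof (rule separation_gauge_greatest)
    fix l1 :: real and w1 assume l1: "0 \<le> l1" "w1 \<in> D"
    have "separation_gauge D d (x + y) - (norm (x + l1 *\<^sub>R w1) - l1 * d) \<le> separation_gauge D d y"
      by (rule separation_gauge_greatest) (use combine[OF l1] in force)
    then show "separation_gauge D d (x + y) - separation_gauge D d y
        \<le> norm (x + l1 *\<^sub>R w1) - l1 * d" by linarith
  qed
  then show ?thesis by linarith
qed

lemma separation_gauge_scaleR:
  assumes t: "t > 0"
  shows "separation_gauge D d (t *\<^sub>R x) \<le> t * separation_gauge D d x"
proof -
  have "separation_gauge D d (t *\<^sub>R x) / t \<le> separation_gauge D d x"
  proof (rule separation_gauge_greatest)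
    fix l :: real and w assume lw: "0 \<le> l" "w \<in> D"
    have "separation_gauge D d (t *\<^sub>R x) \<le> norm (t *\<^sub>R x + (t * l) *\<^sub>R w) - (t * l) * d"
      using separation_gauge_le[OF _ lw(2)] lw t by simp
    also have "norm (t *\<^sub>R x + (t * l) *\<^sub>R w) = t * norm (x + l *\<^sub>R w)"
    proof -
      have "t *\<^sub>R x + (t * l) *\<^sub>R w = t *\<^sub>R (x + l *\<^sub>R w)" by (simp add: algebra_simps)
      then show ?thesis using t by simp
    qed
    finally have "separation_gauge D d (t *\<^sub>R x) \<le> t * (norm (x + l *\<^sub>R w) - l * d)"
      using t by (simp add: algebra_simps)
    then show "separation_gauge D d (t *\<^sub>R x) / t \<le> norm (x + l *\<^sub>R w) - l * d"
      using t by (simp add: divide_le_eq mult.commute)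
  qed
  then show ?thesis using t by (simp add: divide_le_eq mult.commute)
qed

lemma convex_separation_from_origin:
  "\<exists>F. linear F \<and> (\<forall>z. \<bar>F z\<bar> \<le> norm z) \<and> (\<forall>w\<in>D. d \<le> F w)"
proof -
  obtain F where F: "linear F" "\<And>z. F z \<le> separation_gauge D d z"
    using hahn_banach_sublinear[of "separation_gauge D d"] separation_gauge_add separation_gauge_scaleR
    by blast
  have "F z \<le> norm z" for z using F(2) separation_gauge_le_norm order_trans by blast
  then have "\<bar>F z\<bar> \<le> norm z" for z
    using linear_neg[OF F(1), of z] abs_le_iff[of "F z"] by (metis norm_minus_cancel neg_le_iff_le)
  moreover have "d \<le> F w" if "w \<in> D" for w
    using F(2)[of "- w"] separation_gauge_neg[OF that] linear_neg[OF F(1), of w] by simp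
  ultimately show ?thesis using F(1) by blast
qed

end

section \<open>The epigraph of an extended-real function\<close>

definition epigraph_ereal :: "('a \<Rightarrow> ereal) \<Rightarrow> ('a \<times> real) set" where
  "epigraph_ereal f = {p. f (fst p) \<le> ereal (snd p)}"

lemma closed_epigraph_ereal:
  fixes f :: "'a::topological_space \<Rightarrow> ereal"
  assumes "lsc_fun f"
  shows "closed (epigraph_ereal f)"
proof -
  have "- epigraph_ereal f = (\<Union>r. (- {y. f y \<le> ereal r}) \<times> {..<r})"
  proof (intro equalityI subsetI)
    fix p assume "p \<in> - epigraph_ereal f"
    then have "ereal (snd p) < f (fst p)" by (auto simp: epigraph_ereal_def)
    then obtain r where "ereal (snd p) < ereal r" "ereal r < f (fst p)" using ereal_dense2 by blast
    then show "p \<in> (\<Union>r. (- {y. f y \<le> ereal r}) \<times> {..<r})"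
      by (cases p) (auto intro!: exI[of _ r])
  next
    fix p assume "p \<in> (\<Union>r. (- {y. f y \<le> ereal r}) \<times> {..<r})"
    then obtain r where "\<not> f (fst p) \<le> ereal r" "snd p < r" by (auto simp: mem_Times_iff)
    then have "ereal (snd p) < f (fst p)" using less_trans[of "ereal (snd p)" "ereal r"] by (simp add: not_le)
    then show "p \<in> - epigraph_ereal f" by (auto simp: epigraph_ereal_def)
  qed
  moreover have "open (\<Union>r. (- {y. f y \<le> ereal r}) \<times> {..<r})"
    using assms unfolding lsc_fun_def by (intro open_UN ballI open_Times open_Compl) auto
  ultimately show ?thesis by (simp add: closed_def)
qed

lemma convex_epigraph_ereal:
  fixes f :: "'a::real_vector \<Rightarrow> ereal"
  assumes "convex_efun f"
  shows "convex (epigraph_ereal f)"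
  unfolding convex_alt
proof (intro ballI allI impI)
  fix p q and u :: real
  assume p: "p \<in> epigraph_ereal f" and q: "q \<in> epigraph_ereal f" and u: "0 \<le> u \<and> u \<le> 1"
  show "(1 - u) *\<^sub>R p + u *\<^sub>R q \<in> epigraph_ereal f"
  proof (cases "u = 0 \<or> u = 1")
    case True
    then show ?thesis using p q by auto
  next
    case False
    then have u: "0 < u" "u < 1" using u by auto
    have "f ((1 - u) *\<^sub>R fst p + u *\<^sub>R fst q) \<le> ereal (1 - u) * f (fst p) + ereal u * f (fst q)"
      using assms u unfolding convex_efun_def by blast
    also have "\<dots> \<le> ereal (1 - u) * ereal (snd p) + ereal u * ereal (snd q)"
      using p q u by (intro add_mono ereal_mult_left_mono) (auto simp: epigraph_ereal_def)
    finally show ?thesis by (simp add: epigraph_ereal_def)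
  qed
qed

lemma bounded_linear_functional_on_prod_real:
  fixes F :: "'a::real_normed_vector \<times> real \<Rightarrow> real"
  assumes F: "linear F" and bound: "\<And>z. \<bar>F z\<bar> \<le> norm z"
  shows "bounded_linear (\<lambda>y. F (y, 0))" and "F (y, t) = F (y, 0) + F (0, 1) * t"
proof -
  show "bounded_linear (\<lambda>y. F (y, 0))"
  proof (rule bounded_linear_intro[where K = 1])
    show "F (a + b, 0) = F (a, 0) + F (b, 0)" for a b
      using linear_add[OF F, of "(a, 0)" "(b, 0)"] by simp
    show "F (r *\<^sub>R a, 0) = r *\<^sub>R F (a, 0)" for r a
      using linear_cmul[OF F, of r "(a, 0)"] by simp
    show "norm (F (a, 0)) \<le> norm a * 1" for a
      using bound[of "(a, 0)"] by (simp add: norm_Pair)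
  qed
  have "(y, t) = (y, 0) + t *\<^sub>R (0, 1)" by simp
  then show "F (y, t) = F (y, 0) + F (0, 1) * t"
    using linear_add[OF F] linear_cmul[OF F, of t "(0, 1)"] by (metis mult.commute real_scaleR_def)
qed

lemma proper_efunE:
  assumes "proper_efun f"
  obtains x v where "f x = ereal v"
  using assms unfolding proper_efun_def by (metis ereal_cases)

lemma separation_slope_nonneg:
  fixes f :: "'a::real_vector \<Rightarrow> ereal"
  assumes y0: "f y0 = ereal v"
    and sep: "\<And>y t. f y \<le> ereal t \<Longrightarrow> e \<le> \<phi> (y - x) + \<beta> * (t - c)"
  shows "0 \<le> \<beta>"
proof (rule ccontr)
  assume "\<not> 0 \<le> \<beta>"
  define s where "s = (\<bar>\<phi> (y0 - x) + \<beta> * (v - c)\<bar> + \<bar>e\<bar> + 1) / (- \<beta>)"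
  have "f y0 \<le> ereal (v + s)"
    using y0 \<open>\<not> 0 \<le> \<beta>\<close> by (simp add: s_def divide_nonneg_neg)
  then have "e \<le> \<phi> (y0 - x) + \<beta> * (v + s - c)" by (rule sep)
  also have "\<dots> = \<phi> (y0 - x) + \<beta> * (v - c) + \<beta> * s" by (simp add: algebra_simps)
  also have "\<beta> * s = - (\<bar>\<phi> (y0 - x) + \<beta> * (v - c)\<bar> + \<bar>e\<bar> + 1)"
    unfolding s_def using \<open>\<not> 0 \<le> \<beta>\<close> by simp
  finally show False by linarith
qed

text \<open>The separating hyperplane may be vertical (\<open>\<beta> = 0\<close>).\<close>

lemma epigraph_ereal_strict_separation:
  fixes f :: "'a::real_normed_vector \<Rightarrow> ereal"
  assumes lsc: "lsc_fun f" and cvx: "convex_efun f" and pr: "proper_efun f"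
    and below: "ereal c < f x"
  obtains \<phi> \<beta> d where "bounded_linear \<phi>" "0 < d" "0 \<le> \<beta>"
    "\<And>y t. f y \<le> ereal t \<Longrightarrow> d \<le> \<phi> (y - x) + \<beta> * (t - c)"
proof -
  define D where "D = (\<lambda>p. p - (x, c)) ` epigraph_ereal f"
  obtain y0 v where y0: "f y0 = ereal v" using pr by (rule proper_efunE)
  then have "(y0, v) \<in> epigraph_ereal f" by (simp add: epigraph_ereal_def)
  then have "D \<noteq> {}" unfolding D_def by blast
  have "convex D" unfolding D_def
    using convex_epigraph_ereal[OF cvx] by (rule convex_translation_subtract)
  have "(x, c) \<in> - epigraph_ereal f" using below by (auto simp: epigraph_ereal_def)
  moreover have "open (- epigraph_ereal f)" using closed_epigraph_ereal[OF lsc] by (simp add: closed_def)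
  ultimately obtain e where e: "e > 0" "ball (x, c) e \<subseteq> - epigraph_ereal f"
    using open_contains_ball by blast
  have "e \<le> norm w" if "w \<in> D" for w
  proof -
    obtain k where "k \<in> epigraph_ereal f" "w = k - (x, c)" using \<open>w \<in> D\<close> unfolding D_def by blast
    then show ?thesis using e(2) by (force simp: dist_norm norm_minus_commute)
  qed
  then obtain F where F: "linear F" "\<And>z. \<bar>F z\<bar> \<le> norm z" "\<And>w. w \<in> D \<Longrightarrow> e \<le> F w"
    using convex_separation_from_origin[OF \<open>convex D\<close> \<open>D \<noteq> {}\<close>] by blast
  define \<phi> where "\<phi> y = F (y, 0)" for y
  define \<beta> where "\<beta> = F (0, 1)"
  have sep: "e \<le> \<phi> (y - x) + \<beta> * (t - c)" if "f y \<le> ereal t" for y t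
  proof -
    have "(y - x, t - c) \<in> D"
      using that unfolding D_def epigraph_ereal_def by (intro rev_image_eqI[of "(y, t)"]) auto
    then show ?thesis
      using F(3) bounded_linear_functional_on_prod_real(2)[OF F(1,2)] unfolding \<phi>_def \<beta>_def by metis
  qed
  have "0 \<le> \<beta>" by (rule separation_slope_nonneg[where f = f, OF y0]) (rule sep)
  moreover have "bounded_linear \<phi>"
    unfolding \<phi>_def using bounded_linear_functional_on_prod_real(1)[OF F(1,2)] .
  ultimately show ?thesis using that e(1) sep by blast
qed

section \<open>Fenchel--Moreau\<close>

lemma fconj_ge: "ereal (blinfun_apply ys y) - f y \<le> fconj f ys"
  unfolding fconj_def by (rule SUP_upper) simp

lemma fconj_le:
  assumes nm: "\<And>y. f y \<noteq> -\<infinity>" and bound: "\<And>y v. f y = ereal v \<Longrightarrow> blinfun_apply ys y - v \<le> B"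
  shows "fconj f ys \<le> ereal B"
  unfolding fconj_def
proof (rule SUP_least)
  show "ereal (blinfun_apply ys y) - f y \<le> ereal B" for y
    using nm[of y] bound[of y] by (cases "f y") auto
qed

lemma fconj_not_MInfty:
  assumes "proper_efun f"
  shows "fconj f ys \<noteq> -\<infinity>"
proof -
  obtain x v where "f x = ereal v" using assms by (rule proper_efunE)
  then show ?thesis using fconj_ge[of ys x f] by auto
qed

lemma fenchel_moreau_nonvertical:
  fixes f :: "'a::real_normed_vector \<Rightarrow> ereal" and d \<beta> :: real
  assumes nm: "\<And>y. f y \<noteq> -\<infinity>" and \<phi>: "bounded_linear \<phi>" and d: "0 < d" and \<beta>: "0 < \<beta>"
    and sep: "\<And>y t. f y \<le> ereal t \<Longrightarrow> d \<le> \<phi> (y - x) + \<beta> * (t - c)"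
  shows "\<exists>ys. ereal c < ereal (blinfun_apply ys x) - fconj f ys"
proof -
  define ys where "ys = (- 1 / \<beta>) *\<^sub>R Blinfun \<phi>"
  have ys_apply: "blinfun_apply ys z = - \<phi> z / \<beta>" for z
    unfolding ys_def using bounded_linear_Blinfun_apply[OF \<phi>]
    by (simp add: scaleR_blinfun.rep_eq uminus_blinfun.rep_eq)
  have "fconj f ys \<le> ereal (blinfun_apply ys x - c - d / \<beta>)"
  proof (rule fconj_le[OF nm])
    fix y v assume "f y = ereal v"
    then have "d \<le> \<phi> y - \<phi> x + \<beta> * (v - c)"
      using sep[of y v] linear_simps(2)[OF \<phi>] by simp
    then have "d / \<beta> \<le> \<phi> y / \<beta> - \<phi> x / \<beta> + (v - c)"
      using \<beta> by (simp add: field_simps)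
    then show "blinfun_apply ys y - v \<le> blinfun_apply ys x - c - d / \<beta>"
      unfolding ys_apply by simp
  qed
  then have "ereal (blinfun_apply ys x) - ereal (blinfun_apply ys x - c - d / \<beta>)
      \<le> ereal (blinfun_apply ys x) - fconj f ys"
    by (rule ereal_minus_mono[OF order_refl])
  moreover have "ereal c < ereal (blinfun_apply ys x) - ereal (blinfun_apply ys x - c - d / \<beta>)"
    using d \<beta> by simp
  ultimately show ?thesis by (metis order.strict_trans2)
qed

lemma fconj_finite_somewhere:
  fixes f :: "'a::real_normed_vector \<Rightarrow> ereal"
  assumes lsc: "lsc_fun f" and cvx: "convex_efun f" and pr: "proper_efun f"
  obtains ys M where "fconj f ys = ereal M"
proof -
  have nm: "\<And>y. f y \<noteq> -\<infinity>" using pr unfolding proper_efun_def by blast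
  obtain x v where x: "f x = ereal v" using pr by (rule proper_efunE)
  then have "ereal (v - 1) < f x" by simp
  then obtain \<phi> \<beta> d where \<phi>: "bounded_linear \<phi>" and d: "0 < d" and "0 \<le> \<beta>"
    and sep: "\<And>y t. f y \<le> ereal t \<Longrightarrow> d \<le> \<phi> (y - x) + \<beta> * (t - (v - 1))"
    using epigraph_ereal_strict_separation[OF lsc cvx pr] by metis
  have "\<beta> \<noteq> 0"
  proof
    assume "\<beta> = 0"
    then show False using sep[of x v] x d linear_simps(3)[OF \<phi>] by simp
  qed
  then obtain ys where "ereal (v - 1) < ereal (blinfun_apply ys x) - fconj f ys"
    using fenchel_moreau_nonvertical[OF nm \<phi> d _ sep] \<open>0 \<le> \<beta>\<close> by force
  then have "fconj f ys \<noteq> \<infinity>" by auto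
  with fconj_not_MInfty[OF pr] that show ?thesis by (cases "fconj f ys") auto
qed

text \<open>A vertical separating hyperplane is tilted by a large multiple of itself, added to an
  affine minorant of \<open>f\<close>.\<close>

lemma fenchel_moreau_vertical:
  fixes f :: "'a::real_normed_vector \<Rightarrow> ereal" and d :: real
  assumes nm: "\<And>y. f y \<noteq> -\<infinity>" and \<phi>: "bounded_linear \<phi>" and d: "0 < d"
    and sep: "\<And>y v. f y = ereal v \<Longrightarrow> d \<le> \<phi> (y - x)"
    and ys0: "fconj f ys0 = ereal M"
  shows "\<exists>ys. ereal c < ereal (blinfun_apply ys x) - fconj f ys"
proof -
  define s where "s = max 0 ((c - blinfun_apply ys0 x + M + 1) / d)"
  have "0 \<le> s" unfolding s_def by simp
  have "(c - blinfun_apply ys0 x + M + 1) / d \<le> s" unfolding s_def by simp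
  then have large: "c - blinfun_apply ys0 x + M + 1 \<le> s * d"
    using d by (simp add: divide_le_eq)
  define ys where "ys = ys0 - s *\<^sub>R Blinfun \<phi>"
  have ys_apply: "blinfun_apply ys z = blinfun_apply ys0 z - s * \<phi> z" for z
    unfolding ys_def using bounded_linear_Blinfun_apply[OF \<phi>] by (simp add: minus_blinfun.rep_eq scaleR_blinfun.rep_eq)
  have "fconj f ys \<le> ereal (M - s * \<phi> x - s * d)"
  proof (rule fconj_le[OF nm])
    fix y v assume fy: "f y = ereal v"
    have "ereal (blinfun_apply ys0 y - v) \<le> ereal M"
      using fconj_ge[of ys0 y f] fy ys0 by simp
    moreover have "s * d \<le> s * (\<phi> y - \<phi> x)"
      using sep[OF fy] linear_simps(2)[OF \<phi>] \<open>0 \<le> s\<close> by (simp add: mult_left_mono)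
    ultimately show "blinfun_apply ys y - v \<le> M - s * \<phi> x - s * d"
      unfolding ys_apply by (simp add: algebra_simps)
  qed
  then have "ereal (blinfun_apply ys x) - ereal (M - s * \<phi> x - s * d)
      \<le> ereal (blinfun_apply ys x) - fconj f ys"
    by (rule ereal_minus_mono[OF order_refl])
  moreover have "ereal c < ereal (blinfun_apply ys x) - ereal (M - s * \<phi> x - s * d)"
    using large unfolding ys_apply by simp
  ultimately show ?thesis by (metis order.strict_trans2)
qed

theorem fenchel_moreau_below:
  fixes f :: "'a::real_normed_vector \<Rightarrow> ereal"
  assumes lsc: "lsc_fun f" and cvx: "convex_efun f" and pr: "proper_efun f"
    and below: "ereal c < f x"
  shows "\<exists>ys. ereal c < ereal (blinfun_apply ys x) - fconj f ys"
proof -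
  have nm: "\<And>y. f y \<noteq> -\<infinity>" using pr unfolding proper_efun_def by blast
  obtain \<phi> \<beta> d where \<phi>: "bounded_linear \<phi>" and d: "0 < d" and "0 \<le> \<beta>"
    and sep: "\<And>y t. f y \<le> ereal t \<Longrightarrow> d \<le> \<phi> (y - x) + \<beta> * (t - c)"
    using epigraph_ereal_strict_separation[OF lsc cvx pr below] by metis
  show ?thesis
  proof (cases "\<beta> = 0")
    case True
    obtain ys0 M where ys0: "fconj f ys0 = ereal M" using fconj_finite_somewhere[OF lsc cvx pr] .
    have "d \<le> \<phi> (y - x)" if "f y = ereal v" for y v
      using sep[of y v] that True by simp
    then show ?thesis using fenchel_moreau_vertical[OF nm \<phi> d _ ys0] by blast
  next
    case False
    then show ?thesis using fenchel_moreau_nonvertical[OF nm \<phi> d _ sep] \<open>0 \<le> \<beta>\<close> by simp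
  qed
qed

section \<open>The representative inequality\<close>

lemma ereal_add_le_of_real_approx:
  fixes u v w :: ereal
  assumes u: "u \<noteq> -\<infinity>" and v: "v \<noteq> -\<infinity>"
    and approx: "\<And>a b. ereal a < u \<Longrightarrow> ereal b < v \<Longrightarrow> ereal (a + b) \<le> w"
  shows "u + v \<le> w"
proof (rule ereal_le_real)
  fix z assume w: "w \<le> ereal z"
  show "u + v \<le> ereal z"
  proof (rule ccontr)
    assume "\<not> u + v \<le> ereal z"
    then have "ereal z < u + v" by simp
    then have "ereal z - v < u" using u v by (cases u; cases v) auto
    then obtain a where a: "ereal z - v < ereal a" "ereal a < u" using ereal_dense2 by blast
    then have "ereal (z - a) < v" using v by (cases v) auto
    then obtain b where b: "ereal (z - a) < ereal b" "ereal b < v" using ereal_dense2 by blast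
    have "ereal (a + b) \<le> ereal z" using approx[OF a(2) b(2)] w by (rule order.trans)
    then show False using b(1) by simp
  qed
qed

lemma fenchel_young_sum_le_conj2:
  fixes f :: "'a::real_normed_vector \<Rightarrow> ereal"
  assumes lsc: "lsc_fun f" and cvx: "convex_efun f" and pr: "proper_efun f"
    and h_le: "\<And>y ys. h (y, ys) \<le> f y + fconj f ys"
  shows "f x + fconj f xs \<le> conj2 h (xs, x)"
proof -
  have nm: "\<And>y. f y \<noteq> -\<infinity>" using pr unfolding proper_efun_def by blast
  show ?thesis
  proof (rule ereal_add_le_of_real_approx[OF nm fconj_not_MInfty[OF pr]])
    fix a b assume a: "ereal a < f x" and b: "ereal b < fconj f xs"
    obtain ys where ys: "ereal a < ereal (blinfun_apply ys x) - fconj f ys"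
      using fenchel_moreau_below[OF lsc cvx pr a] by blast
    then obtain r where r: "fconj f ys = ereal r" "a < blinfun_apply ys x - r"
      using fconj_not_MInfty[OF pr, of ys] by (cases "fconj f ys") auto
    obtain y where y: "ereal b < ereal (blinfun_apply xs y) - f y"
      using b unfolding fconj_def by (auto simp: less_SUP_iff)
    then obtain w where w: "f y = ereal w" "b < blinfun_apply xs y - w"
      using nm[of y] by (cases "f y") auto
    have "ereal (a + b) \<le> ereal (blinfun_apply xs y + blinfun_apply ys x) - (f y + fconj f ys)"
      using r w by simp
    also have "\<dots> \<le> ereal (blinfun_apply xs y + blinfun_apply ys x) - h (y, ys)"
      by (rule ereal_minus_mono[OF order_refl h_le])
    also have "\<dots> \<le> conj2 h (xs, x)"
      unfolding conj2_def by (rule SUP_upper2[where i = "(y, ys)"]) auto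
    finally show "ereal (a + b) \<le> conj2 h (xs, x)" .
  qed
qed

theorem lemma4p1:
  fixes f :: "'a::banach \<Rightarrow> ereal"
    and h :: "'a \<times> ('a \<Rightarrow>\<^sub>L real) \<Rightarrow> ereal"
  assumes "reflexive_space TYPE('a)"
    and "lsc_fun f" and "proper_efun f" and "convex_efun f"
    and "h \<in> repr_family (subdiff f)"
    and "\<And>x xs. h (x, xs) \<le> f x + fconj f xs"
  shows "h (x, xs) + conj2 h (xs, x) \<ge> ereal (blinfun_apply xs x) + f x + fconj f xs"
proof -
  have "ereal (blinfun_apply xs x) \<le> h (x, xs)"
    using assms(5) unfolding repr_family_def by blast
  moreover have "f x + fconj f xs \<le> conj2 h (xs, x)"
    using fenchel_young_sum_le_conj2[OF assms(2,4,3,6)] .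
  ultimately show ?thesis by (metis add.assoc add_mono)
qed

end
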